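(* Let $\mathfrak g$ be a pre-Lie algebra and $r_1,r_2\in\mathrm{Sym}^2(\mathfrak g)$ two $\mathfrak s$-matrices. If $(\phi,\varphi)$ is a weak homomorphism from $r_2$ to $r_1$, then $(\phi,\varphi)$ is a weak homomorphism from the phase space $(\mathfrak g^c,\mathfrak g^{*c},\omega_p,r_2)$ to the phase space $(\mathfrak g^c,\mathfrak g^{*c},\omega_p,r_1)$; that is, $\varphi^*:(\mathfrak g^*,[\cdot,\cdot]_{r_2})\to(\mathfrak g^*,[\cdot,\cdot]_{r_1})$ is a Lie algebra homomorphism and $\phi+\varphi^*:(\mathfrak g\oplus\mathfrak g^*,[\cdot,\cdot]_{p,r_2})\to(\mathfrak g\oplus\mathfrak g^*,[\cdot,\cdot]_{p,r_1})$ is a Lie algebra homomorphism.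
   Context: A pre-Lie algebra is a finite-dimensional vector space $\mathfrak g$ over a field of characteristic $0$ with product $\cdot$ satisfying $(x\cdot y)\cdot z-x\cdot(y\cdot z)=(y\cdot x)\cdot z-y\cdot(x\cdot z)$; $\mathfrak g^c$ has bracket $[x,y]_{\mathfrak g}=x\cdot y-y\cdot x$. Define $\langle L^*_x\alpha,y\rangle=-\langle\alpha,x\cdot y\rangle$, $\langle R^*_x\alpha,y\rangle=-\langle\alpha,y\cdot x\rangle$, $\mathrm{ad}^*_x=L^*_x-R^*_x$. For $r\in\mathrm{Sym}^2(\mathfrak g)$, $\langle r^\sharp(\alpha),\beta\rangle=r(\alpha,\beta)$; for $r=\sum_ia_i\otimes b_i$, $[r,r]=-\sum a_i\cdot a_j\otimes b_i\otimes b_j+\sum a_i\otimes b_i\cdot a_j\otimes b_j+\sum a_i\otimes a_j\otimes[b_i,b_j]_{\mathfrak g}$; $r$ is an $\mathfrak s$-matrix if $[r,r]=0$. Set $\alpha\cdot_r\beta=\mathrm{ad}^*_{r^\sharp(\alpha)}\beta-R^*_{r^\sharp(\beta)}\alpha$, $[\alpha,\beta]_r=L^*_{r^\sharp(\alpha)}\beta-L^*_{r^\sharp(\beta)}\alpha$, and for $\alpha\in\mathfrak g^*$ define $L^*_\alpha:\mathfrak g\to\mathfrak g$ by $\langle L^*_\alpha x,\beta\rangle=-\langle x,\alpha\cdot_r\beta\rangle$. The phase space $(\mathfrak g^c,\mathfrak g^{*c},\omega_p,r)$ associated to $r$ is $\mathfrak g\oplus\mathfrak g^*$ with the Lie bracket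 $[x+\alpha,y+\beta]_{p,r}=[\alpha,\beta]_r+L^*_x\beta-L^*_y\alpha+L^*_\alpha y-L^*_\beta x+[x,y]_{\mathfrak g}$ and the form $\omega_p(x+\alpha,y+\beta)=\langle\alpha,y\rangle-\langle x,\beta\rangle$. A weak homomorphism from $\mathfrak s$-matrix $r_2$ to $\mathfrak s$-matrix $r_1$ is a pair $(\phi,\varphi)$ with $\phi:\mathfrak g^c\to\mathfrak g^c$ a Lie algebra homomorphism and $\varphi:\mathfrak g\to\mathfrak g$ linear, such that $(\varphi\otimes\mathrm{Id})r_1=(\mathrm{Id}\otimes\phi)r_2$ and $\varphi(\phi(x)\cdot y)=x\cdot\varphi(y)$ for all $x,y\in\mathfrak g$. *)

theory Defs
  imports Main "HOL-Library.Function_Algebras" "HOL-Library.Product_Plus"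
begin

(* The pre-Lie algebra g is k^n, elements are functions 'n => 'k (coordinates w.r.t.
   a fixed basis ev j); the dual g* is also 'n => 'k with the canonical pairing. *)

definition ev :: "'n \<Rightarrow> ('n \<Rightarrow> 'k::zero_neq_one)" where
  "ev j = (\<lambda>i. if i = j then 1 else 0)"

definition smul :: "'k::times \<Rightarrow> ('n \<Rightarrow> 'k) \<Rightarrow> ('n \<Rightarrow> 'k)" where
  "smul c x = (\<lambda>i. c * x i)"

definition pair :: "('n::finite \<Rightarrow> 'k::comm_ring_1) \<Rightarrow> ('n \<Rightarrow> 'k) \<Rightarrow> 'k" where
  "pair \<alpha> x = (\<Sum>i\<in>UNIV. \<alpha> i * x i)"

definition lin :: "(('n \<Rightarrow> 'k::comm_ring_1) \<Rightarrow> ('m \<Rightarrow> 'k)) \<Rightarrow> bool" where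
  "lin f \<longleftrightarrow> (\<forall>x y. f (x + y) = f x + f y) \<and> (\<forall>c x. f (smul c x) = smul c (f x))"

definition bilin :: "(('n \<Rightarrow> 'k::comm_ring_1) \<Rightarrow> ('n \<Rightarrow> 'k) \<Rightarrow> ('n \<Rightarrow> 'k)) \<Rightarrow> bool" where
  "bilin m \<longleftrightarrow> (\<forall>x. lin (m x)) \<and> (\<forall>y. lin (\<lambda>x. m x y))"

definition preLie :: "(('n \<Rightarrow> 'k::comm_ring_1) \<Rightarrow> ('n \<Rightarrow> 'k) \<Rightarrow> ('n \<Rightarrow> 'k)) \<Rightarrow> bool" where
  "preLie m \<longleftrightarrow> bilin m \<and>
     (\<forall>x y z. m (m x y) z - m x (m y z) = m (m y x) z - m y (m x z))"

definition comm :: "(('n \<Rightarrow> 'k::comm_ring_1) \<Rightarrow> ('n \<Rightarrow> 'k) \<Rightarrow> ('n \<Rightarrow> 'k)) \<Rightarrow> ('n \<Rightarrow> 'k) \<Rightarrow> ('n \<Rightarrow> 'k) \<Rightarrow> ('n \<Rightarrow> 'k)" where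
  "comm m x y = m x y - m y x"

(* <L*_x a, y> = - <a, x.y>,  <R*_x a, y> = - <a, y.x> *)
definition Lstar :: "(('n::finite \<Rightarrow> 'k::comm_ring_1) \<Rightarrow> ('n \<Rightarrow> 'k) \<Rightarrow> ('n \<Rightarrow> 'k)) \<Rightarrow> ('n \<Rightarrow> 'k) \<Rightarrow> ('n \<Rightarrow> 'k) \<Rightarrow> ('n \<Rightarrow> 'k)" where
  "Lstar m x \<alpha> = (\<lambda>j. - pair \<alpha> (m x (ev j)))"

definition Rstar :: "(('n::finite \<Rightarrow> 'k::comm_ring_1) \<Rightarrow> ('n \<Rightarrow> 'k) \<Rightarrow> ('n \<Rightarrow> 'k)) \<Rightarrow> ('n \<Rightarrow> 'k) \<Rightarrow> ('n \<Rightarrow> 'k) \<Rightarrow> ('n \<Rightarrow> 'k)" where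
  "Rstar m x \<alpha> = (\<lambda>j. - pair \<alpha> (m (ev j) x))"

definition adstar :: "(('n::finite \<Rightarrow> 'k::comm_ring_1) \<Rightarrow> ('n \<Rightarrow> 'k) \<Rightarrow> ('n \<Rightarrow> 'k)) \<Rightarrow> ('n \<Rightarrow> 'k) \<Rightarrow> ('n \<Rightarrow> 'k) \<Rightarrow> ('n \<Rightarrow> 'k)" where
  "adstar m x \<alpha> = Lstar m x \<alpha> - Rstar m x \<alpha>"

(* r in g (x) g is given by its coefficient matrix: r = sum_{i,j} r i j * ev i (x) ev j *)
definition symm :: "('n \<Rightarrow> 'n \<Rightarrow> 'k) \<Rightarrow> bool" where
  "symm r \<longleftrightarrow> (\<forall>i j. r i j = r j i)"

(* <r#(a), b> = r(a,b) *)
definition rsharp :: "('n::finite \<Rightarrow> 'n \<Rightarrow> 'k::comm_ring_1) \<Rightarrow> ('n \<Rightarrow> 'k) \<Rightarrow> ('n \<Rightarrow> 'k)" where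
  "rsharp r \<alpha> = (\<lambda>j. \<Sum>i\<in>UNIV. \<alpha> i * r i j)"

(* [r,r] in g (x) g (x) g, by components (u,v,w) *)
definition rr :: "(('n::finite \<Rightarrow> 'k::comm_ring_1) \<Rightarrow> ('n \<Rightarrow> 'k) \<Rightarrow> ('n \<Rightarrow> 'k)) \<Rightarrow> ('n \<Rightarrow> 'n \<Rightarrow> 'k) \<Rightarrow> 'n \<Rightarrow> 'n \<Rightarrow> 'n \<Rightarrow> 'k" where
  "rr m r = (\<lambda>u v w.
      - (\<Sum>p\<in>UNIV. \<Sum>s\<in>UNIV. r p v * r s w * m (ev p) (ev s) u)
      + (\<Sum>q\<in>UNIV. \<Sum>s\<in>UNIV. r u q * r s w * m (ev q) (ev s) v)
      + (\<Sum>q\<in>UNIV. \<Sum>t\<in>UNIV. r u q * r v t * comm m (ev q) (ev t) w))"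

definition smatrix :: "(('n::finite \<Rightarrow> 'k::comm_ring_1) \<Rightarrow> ('n \<Rightarrow> 'k) \<Rightarrow> ('n \<Rightarrow> 'k)) \<Rightarrow> ('n \<Rightarrow> 'n \<Rightarrow> 'k) \<Rightarrow> bool" where
  "smatrix m r \<longleftrightarrow> rr m r = (\<lambda>u v w. 0)"

definition dot_r :: "(('n::finite \<Rightarrow> 'k::comm_ring_1) \<Rightarrow> ('n \<Rightarrow> 'k) \<Rightarrow> ('n \<Rightarrow> 'k)) \<Rightarrow> ('n \<Rightarrow> 'n \<Rightarrow> 'k) \<Rightarrow> ('n \<Rightarrow> 'k) \<Rightarrow> ('n \<Rightarrow> 'k) \<Rightarrow> ('n \<Rightarrow> 'k)" where
  "dot_r m r \<alpha> \<beta> = adstar m (rsharp r \<alpha>) \<beta> - Rstar m (rsharp r \<beta>) \<alpha>"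

definition brk_r :: "(('n::finite \<Rightarrow> 'k::comm_ring_1) \<Rightarrow> ('n \<Rightarrow> 'k) \<Rightarrow> ('n \<Rightarrow> 'k)) \<Rightarrow> ('n \<Rightarrow> 'n \<Rightarrow> 'k) \<Rightarrow> ('n \<Rightarrow> 'k) \<Rightarrow> ('n \<Rightarrow> 'k) \<Rightarrow> ('n \<Rightarrow> 'k)" where
  "brk_r m r \<alpha> \<beta> = Lstar m (rsharp r \<alpha>) \<beta> - Lstar m (rsharp r \<beta>) \<alpha>"

(* L*_a : g -> g,  <L*_a x, b> = - <x, a ._r b> *)
definition Lstar_dual :: "(('n::finite \<Rightarrow> 'k::comm_ring_1) \<Rightarrow> ('n \<Rightarrow> 'k) \<Rightarrow> ('n \<Rightarrow> 'k)) \<Rightarrow> ('n \<Rightarrow> 'n \<Rightarrow> 'k) \<Rightarrow> ('n \<Rightarrow> 'k) \<Rightarrow> ('n \<Rightarrow> 'k) \<Rightarrow> ('n \<Rightarrow> 'k)" where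
  "Lstar_dual m r \<alpha> x = (\<lambda>j. - pair x (dot_r m r \<alpha> (ev j)))"

(* Lie bracket of the phase space g (+) g*, elements written as pairs (x, a) *)
definition bracket_p :: "(('n::finite \<Rightarrow> 'k::comm_ring_1) \<Rightarrow> ('n \<Rightarrow> 'k) \<Rightarrow> ('n \<Rightarrow> 'k)) \<Rightarrow> ('n \<Rightarrow> 'n \<Rightarrow> 'k)
     \<Rightarrow> ('n \<Rightarrow> 'k) \<times> ('n \<Rightarrow> 'k) \<Rightarrow> ('n \<Rightarrow> 'k) \<times> ('n \<Rightarrow> 'k) \<Rightarrow> ('n \<Rightarrow> 'k) \<times> ('n \<Rightarrow> 'k)" where
  "bracket_p m r a b = (case a of (x, \<alpha>) \<Rightarrow> case b of (y, \<beta>) \<Rightarrow>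
     (Lstar_dual m r \<alpha> y - Lstar_dual m r \<beta> x + comm m x y,
      brk_r m r \<alpha> \<beta> + Lstar m x \<beta> - Lstar m y \<alpha>))"

definition tensor_map :: "(('n::finite \<Rightarrow> 'k::comm_ring_1) \<Rightarrow> ('n \<Rightarrow> 'k)) \<Rightarrow> (('n \<Rightarrow> 'k) \<Rightarrow> ('n \<Rightarrow> 'k)) \<Rightarrow> ('n \<Rightarrow> 'n \<Rightarrow> 'k) \<Rightarrow> 'n \<Rightarrow> 'n \<Rightarrow> 'k" where
  "tensor_map f g T = (\<lambda>u v. \<Sum>p\<in>UNIV. \<Sum>q\<in>UNIV. T p q * f (ev p) u * g (ev q) v)"

definition dualmap :: "(('n::finite \<Rightarrow> 'k::comm_ring_1) \<Rightarrow> ('n \<Rightarrow> 'k)) \<Rightarrow> ('n \<Rightarrow> 'k) \<Rightarrow> ('n \<Rightarrow> 'k)" where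
  "dualmap f \<alpha> = (\<lambda>j. pair \<alpha> (f (ev j)))"

definition lie_hom :: "(('n \<Rightarrow> 'k::comm_ring_1) \<Rightarrow> ('n \<Rightarrow> 'k) \<Rightarrow> ('n \<Rightarrow> 'k)) \<Rightarrow> (('n \<Rightarrow> 'k) \<Rightarrow> ('n \<Rightarrow> 'k) \<Rightarrow> ('n \<Rightarrow> 'k)) \<Rightarrow> (('n \<Rightarrow> 'k) \<Rightarrow> ('n \<Rightarrow> 'k)) \<Rightarrow> bool" where
  "lie_hom b1 b2 f \<longleftrightarrow> lin f \<and> (\<forall>x y. f (b1 x y) = b2 (f x) (f y))"

definition lin_pair :: "(('n \<Rightarrow> 'k::comm_ring_1) \<times> ('n \<Rightarrow> 'k) \<Rightarrow> ('n \<Rightarrow> 'k) \<times> ('n \<Rightarrow> 'k)) \<Rightarrow> bool" where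
  "lin_pair F \<longleftrightarrow> (\<forall>a b. F (a + b) = F a + F b) \<and>
     (\<forall>c x \<alpha>. F (smul c x, smul c \<alpha>) = (smul c (fst (F (x, \<alpha>))), smul c (snd (F (x, \<alpha>)))))"

definition lie_hom_pair :: "(('n \<Rightarrow> 'k::comm_ring_1) \<times> ('n \<Rightarrow> 'k) \<Rightarrow> ('n \<Rightarrow> 'k) \<times> ('n \<Rightarrow> 'k) \<Rightarrow> ('n \<Rightarrow> 'k) \<times> ('n \<Rightarrow> 'k))
    \<Rightarrow> (('n \<Rightarrow> 'k) \<times> ('n \<Rightarrow> 'k) \<Rightarrow> ('n \<Rightarrow> 'k) \<times> ('n \<Rightarrow> 'k) \<Rightarrow> ('n \<Rightarrow> 'k) \<times> ('n \<Rightarrow> 'k))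
    \<Rightarrow> (('n \<Rightarrow> 'k) \<times> ('n \<Rightarrow> 'k) \<Rightarrow> ('n \<Rightarrow> 'k) \<times> ('n \<Rightarrow> 'k)) \<Rightarrow> bool" where
  "lie_hom_pair b1 b2 F \<longleftrightarrow> lin_pair F \<and> (\<forall>a b. F (b1 a b) = b2 (F a) (F b))"

definition weak_hom :: "(('n::finite \<Rightarrow> 'k::comm_ring_1) \<Rightarrow> ('n \<Rightarrow> 'k) \<Rightarrow> ('n \<Rightarrow> 'k)) \<Rightarrow> ('n \<Rightarrow> 'n \<Rightarrow> 'k) \<Rightarrow> ('n \<Rightarrow> 'n \<Rightarrow> 'k)
    \<Rightarrow> (('n \<Rightarrow> 'k) \<Rightarrow> ('n \<Rightarrow> 'k)) \<Rightarrow> (('n \<Rightarrow> 'k) \<Rightarrow> ('n \<Rightarrow> 'k)) \<Rightarrow> bool" where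
  "weak_hom m r2 r1 phi vphi \<longleftrightarrow>
     lie_hom (comm m) (comm m) phi \<and> lin vphi \<and>
     tensor_map vphi id r1 = tensor_map id phi r2 \<and>
     (\<forall>x y. vphi (m (phi x) y) = m x (vphi y))"

end

theory Submission
  imports Defs
begin

text \<open>
  Everything reduces to adjointness for the pairing of \<open>g\<^sup>*\<close> with \<open>g\<close>.
  Paired with \<open>\<alpha> \<otimes> \<beta>\<close>, the condition \<open>(vphi \<otimes> id) r1 = (id \<otimes> phi) r2\<close> reads
  \<open>r1(vphi\<^sup>* \<alpha>, \<beta>) = r2(\<alpha>, phi\<^sup>* \<beta>)\<close>, so that \<open>r1# \<circ> vphi\<^sup>* = phi \<circ> r2#\<close> and, by
  symmetry of both matrices, \<open>vphi \<circ> r1# = r2# \<circ> phi\<^sup>*\<close>. Dualising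
  \<open>phi [x, y] = [phi x, phi y]\<close> and \<open>vphi (phi x \<cdot> y) = x \<cdot> vphi y\<close> gives intertwining
  relations for \<open>ad\<^sup>*\<close>, \<open>L\<^sup>*\<close> and \<open>R\<^sup>*\<close>; together they show that \<open>vphi\<^sup>*\<close> and \<open>phi\<close>
  intertwine every term of both brackets.
\<close>

lemma sum_fun_apply: "(\<Sum>i\<in>A. f i) x = (\<Sum>i\<in>A. f i x)"
  by (induction A rule: infinite_finite_induct) auto

lemma smul_apply [simp]: "smul c x j = c * x j"
  by (simp add: smul_def)

lemma pair_ev_right [simp]: "pair \<alpha> (ev j) = \<alpha> j"
  unfolding pair_def ev_def by (simp add: if_distrib cong: if_cong)

lemma pair_commute: "pair \<alpha> x = pair x \<alpha>"
  unfolding pair_def by (simp add: mult.commute)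

lemma pair_add_left [simp]: "pair (\<alpha> + \<beta>) x = pair \<alpha> x + pair \<beta> x"
  unfolding pair_def by (simp add: distrib_right sum.distrib)

lemma pair_add_right [simp]: "pair \<alpha> (x + y) = pair \<alpha> x + pair \<alpha> y"
  unfolding pair_def by (simp add: distrib_left sum.distrib)

lemma pair_diff_left [simp]: "pair (\<alpha> - \<beta>) x = pair \<alpha> x - pair \<beta> x"
  unfolding pair_def by (simp add: left_diff_distrib sum_subtractf)

lemma pair_diff_right [simp]: "pair \<alpha> (x - y) = pair \<alpha> x - pair \<alpha> y"
  unfolding pair_def by (simp add: right_diff_distrib sum_subtractf)

lemma pair_uminus_left [simp]: "pair (- \<alpha>) x = - pair \<alpha> x"
  unfolding pair_def by (simp add: sum_negf)

lemma pair_smul_left [simp]: "pair (smul c \<alpha>) x = c * pair \<alpha> x"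
  unfolding pair_def by (simp add: sum_distrib_left mult_ac)

lemma pair_smul_right [simp]: "pair \<alpha> (smul c x) = c * pair \<alpha> x"
  unfolding pair_def by (simp add: sum_distrib_left mult_ac)

lemma pair_ext:
  fixes \<alpha> \<beta> :: "'n::finite \<Rightarrow> 'k::comm_ring_1"
  assumes "\<And>y. pair \<alpha> y = pair \<beta> y"
  shows "\<alpha> = \<beta>"
proof
  fix j show "\<alpha> j = \<beta> j" using assms[of "ev j"] by simp
qed

lemma pair_ext_right:
  fixes x y :: "'n::finite \<Rightarrow> 'k::comm_ring_1"
  assumes "\<And>\<beta>. pair \<beta> x = pair \<beta> y"
  shows "x = y"
  using pair_ext[of x y] assms by (simp add: pair_commute)

lemma lin_add: "lin f \<Longrightarrow> f (x + y) = f x + f y"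
  unfolding lin_def by blast

lemma lin_smul: "lin f \<Longrightarrow> f (smul c x) = smul c (f x)"
  unfolding lin_def by blast

lemma lin_zero: "lin f \<Longrightarrow> f 0 = 0"
  using lin_add[of f 0 0] by simp

lemma lin_diff: "lin f \<Longrightarrow> f (x - y) = f x - f y"
  using lin_add[of f "x - y" y] by (simp add: eq_diff_eq)

lemma lin_sum: "lin f \<Longrightarrow> f (\<Sum>i\<in>A. g i) = (\<Sum>i\<in>A. f (g i))"
  by (induction A rule: infinite_finite_induct) (auto simp: lin_zero lin_add)

lemma sum_smul_ev: "(\<Sum>i\<in>UNIV. smul (x i) (ev i)) = (x :: 'n::finite \<Rightarrow> 'k::comm_ring_1)"
proof
  fix j show "(\<Sum>i\<in>UNIV. smul (x i) (ev i)) j = x j"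
    unfolding sum_fun_apply smul_def ev_def by (simp add: if_distrib cong: if_cong)
qed

lemma lin_expand:
  fixes f :: "('n::finite \<Rightarrow> 'k::comm_ring_1) \<Rightarrow> ('m \<Rightarrow> 'k)"
  assumes "lin f"
  shows "f x = (\<Sum>i\<in>UNIV. smul (x i) (f (ev i)))"
  using lin_sum[OF assms, of "\<lambda>i. smul (x i) (ev i)" UNIV]
  by (simp add: sum_smul_ev lin_smul[OF assms])

lemma lin_dualmap: "lin (dualmap f)"
  unfolding lin_def dualmap_def by (auto simp: fun_eq_iff)

lemma pair_dualmap:
  fixes f :: "('n::finite \<Rightarrow> 'k::comm_ring_1) \<Rightarrow> ('n \<Rightarrow> 'k)"
  assumes "lin f"
  shows "pair (dualmap f \<alpha>) x = pair \<alpha> (f x)"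
proof -
  have "pair \<alpha> (f x) = (\<Sum>j\<in>UNIV. \<Sum>i\<in>UNIV. \<alpha> j * (x i * f (ev i) j))"
    by (subst lin_expand[OF assms]) (simp add: pair_def sum_fun_apply sum_distrib_left)
  also have "\<dots> = (\<Sum>i\<in>UNIV. \<Sum>j\<in>UNIV. \<alpha> j * (x i * f (ev i) j))"
    by (rule sum.swap)
  also have "\<dots> = pair (dualmap f \<alpha>) x"
    by (simp add: pair_def dualmap_def sum_distrib_left mult_ac)
  finally show ?thesis ..
qed

lemma dualmap_id [simp]: "dualmap id \<alpha> = \<alpha>"
  by (simp add: dualmap_def fun_eq_iff)

lemma pair_Lstar: "lin (m x) \<Longrightarrow> pair (Lstar m x \<alpha>) y = - pair \<alpha> (m x y)"
proof -
  assume "lin (m x)"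
  moreover have "Lstar m x \<alpha> = - dualmap (m x) \<alpha>"
    unfolding Lstar_def dualmap_def by auto
  ultimately show ?thesis by (simp add: pair_dualmap)
qed

lemma pair_Rstar: "lin (\<lambda>z. m z x) \<Longrightarrow> pair (Rstar m x \<alpha>) y = - pair \<alpha> (m y x)"
proof -
  assume "lin (\<lambda>z. m z x)"
  moreover have "Rstar m x \<alpha> = - dualmap (\<lambda>z. m z x) \<alpha>"
    unfolding Rstar_def dualmap_def by auto
  ultimately show ?thesis by (simp add: pair_dualmap)
qed

lemma pair_adstar:
  "lin (m x) \<Longrightarrow> lin (\<lambda>z. m z x) \<Longrightarrow> pair (adstar m x \<alpha>) y = - pair \<alpha> (comm m x y)"
  by (simp add: adstar_def pair_Lstar pair_Rstar comm_def)

lemma pair_Lstar_dual: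
  "lin (dot_r m r \<alpha>) \<Longrightarrow> pair (Lstar_dual m r \<alpha> x) \<beta> = - pair x (dot_r m r \<alpha> \<beta>)"
proof -
  assume "lin (dot_r m r \<alpha>)"
  moreover have "Lstar_dual m r \<alpha> x = - dualmap (dot_r m r \<alpha>) x"
    unfolding Lstar_dual_def dualmap_def by auto
  ultimately show ?thesis by (simp add: pair_dualmap)
qed

lemma rsharp_add: "rsharp r (\<alpha> + \<beta>) = rsharp r \<alpha> + rsharp r \<beta>"
  unfolding rsharp_def by (auto simp: fun_eq_iff distrib_right sum.distrib)

lemma rsharp_smul: "rsharp r (smul c \<alpha>) = smul c (rsharp r \<alpha>)"
  unfolding rsharp_def by (auto simp: fun_eq_iff sum_distrib_left mult_ac)

lemma lin_dot_r:
  fixes m :: "('n::finite \<Rightarrow> 'k::comm_ring_1) \<Rightarrow> ('n \<Rightarrow> 'k) \<Rightarrow> ('n \<Rightarrow> 'k)"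
  assumes "bilin m"
  shows "lin (dot_r m r \<alpha>)"
proof -
  have lm: "\<And>x. lin (m x)" using assms unfolding bilin_def by blast
  have dot_r_apply: "\<And>\<beta> j. dot_r m r \<alpha> \<beta> j =
      - pair \<beta> (m (rsharp r \<alpha>) (ev j)) + pair \<beta> (m (ev j) (rsharp r \<alpha>))
      + pair \<alpha> (m (ev j) (rsharp r \<beta>))"
    by (simp add: dot_r_def adstar_def Lstar_def Rstar_def)
  show ?thesis
    unfolding lin_def fun_eq_iff
    by (simp add: dot_r_apply rsharp_add rsharp_smul lin_add[OF lm] lin_smul[OF lm] algebra_simps)
qed

definition tensor_pair :: "('n::finite \<Rightarrow> 'n \<Rightarrow> 'k::comm_ring_1) \<Rightarrow> ('n \<Rightarrow> 'k) \<Rightarrow> ('n \<Rightarrow> 'k) \<Rightarrow> 'k"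
  where "tensor_pair T \<alpha> \<beta> = (\<Sum>p\<in>UNIV. \<Sum>q\<in>UNIV. \<alpha> p * T p q * \<beta> q)"

lemma pair_rsharp: "pair \<beta> (rsharp r \<alpha>) = tensor_pair r \<alpha> \<beta>"
  unfolding pair_def rsharp_def tensor_pair_def
  by (subst sum.swap) (simp add: sum_distrib_left sum_distrib_right mult_ac)

lemma tensor_pair_commute: "symm r \<Longrightarrow> tensor_pair r \<alpha> \<beta> = tensor_pair r \<beta> \<alpha>"
  unfolding tensor_pair_def symm_def by (subst sum.swap) (simp add: mult_ac)

lemma sum_swap4:
  "(\<Sum>u\<in>A. \<Sum>v\<in>B. \<Sum>p\<in>C. \<Sum>q\<in>D. X u v p q) =
   (\<Sum>p\<in>C. \<Sum>q\<in>D. \<Sum>u\<in>A. \<Sum>v\<in>B. (X u v p q :: 'a::comm_monoid_add))"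
proof -
  have "(\<Sum>u\<in>A. \<Sum>v\<in>B. \<Sum>p\<in>C. \<Sum>q\<in>D. X u v p q) = (\<Sum>u\<in>A. \<Sum>p\<in>C. \<Sum>q\<in>D. \<Sum>v\<in>B. X u v p q)"
    by (intro sum.cong refl, subst sum.swap) (simp add: sum.swap[of _ B D])
  also have "\<dots> = (\<Sum>p\<in>C. \<Sum>q\<in>D. \<Sum>u\<in>A. \<Sum>v\<in>B. X u v p q)"
    by (subst sum.swap) (simp add: sum.swap[of _ A D])
  finally show ?thesis .
qed

lemma tensor_pair_tensor_map:
  "tensor_pair (tensor_map f g T) \<alpha> \<beta> = tensor_pair T (dualmap f \<alpha>) (dualmap g \<beta>)"
proof -
  have "tensor_pair T (dualmap f \<alpha>) (dualmap g \<beta>) =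
      (\<Sum>p\<in>UNIV. \<Sum>q\<in>UNIV. \<Sum>u\<in>UNIV. \<Sum>v\<in>UNIV. \<alpha> u * (\<beta> v * (T p q * (f (ev p) u * g (ev q) v))))"
    unfolding tensor_pair_def dualmap_def pair_def
    by (simp add: sum_distrib_left sum_distrib_right mult_ac)
  also have "\<dots> = tensor_pair (tensor_map f g T) \<alpha> \<beta>"
    unfolding tensor_pair_def tensor_map_def
    by (subst sum_swap4) (simp add: sum_distrib_left sum_distrib_right mult_ac)
  finally show ?thesis ..
qed

lemma lin_pair_map_prod:
  assumes "lin f" and "lin g"
  shows "lin_pair (\<lambda>(x, \<alpha>). (f x, g \<alpha>))"
  unfolding lin_pair_def
  by (auto simp: lin_add[OF assms(1)] lin_add[OF assms(2)] lin_smul[OF assms(1)] lin_smul[OF assms(2)])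

locale weak_hom_setting =
  fixes m :: "('n::finite \<Rightarrow> 'k::comm_ring_1) \<Rightarrow> ('n \<Rightarrow> 'k) \<Rightarrow> ('n \<Rightarrow> 'k)"
    and r1 r2 :: "'n \<Rightarrow> 'n \<Rightarrow> 'k"
    and phi vphi :: "('n \<Rightarrow> 'k) \<Rightarrow> ('n \<Rightarrow> 'k)"
  assumes bilin: "bilin m"
    and symm_r1: "symm r1" and symm_r2: "symm r2"
    and weak_hom: "weak_hom m r2 r1 phi vphi"
begin

lemma lin_mult_left: "lin (m x)"
  and lin_mult_right: "lin (\<lambda>z. m z x)"
  using bilin unfolding bilin_def by blast+

lemma lin_phi: "lin phi"
  and phi_comm: "phi (comm m x y) = comm m (phi x) (phi y)"
  and lin_vphi: "lin vphi"
  and tensor_map_eq: "tensor_map vphi id r1 = tensor_map id phi r2"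
  and vphi_mult: "vphi (m (phi x) y) = m x (vphi y)"
  using weak_hom unfolding weak_hom_def lie_hom_def by blast+

lemma tensor_pair_r1_r2: "tensor_pair r1 (dualmap vphi \<alpha>) \<beta> = tensor_pair r2 \<alpha> (dualmap phi \<beta>)"
  using arg_cong[OF tensor_map_eq, of "\<lambda>T. tensor_pair T \<alpha> \<beta>"]
  by (simp add: tensor_pair_tensor_map)

lemma rsharp_dualmap_vphi: "rsharp r1 (dualmap vphi \<alpha>) = phi (rsharp r2 \<alpha>)"
  by (rule pair_ext_right)
    (simp add: pair_rsharp tensor_pair_r1_r2 flip: pair_dualmap[OF lin_phi])

lemma vphi_rsharp: "vphi (rsharp r1 \<gamma>) = rsharp r2 (dualmap phi \<gamma>)"
proof (rule pair_ext_right)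
  fix \<alpha>
  have "pair \<alpha> (vphi (rsharp r1 \<gamma>)) = tensor_pair r1 (dualmap vphi \<alpha>) \<gamma>"
    by (simp add: pair_rsharp tensor_pair_commute[OF symm_r1] flip: pair_dualmap[OF lin_vphi])
  also have "\<dots> = tensor_pair r2 (dualmap phi \<gamma>) \<alpha>"
    by (simp add: tensor_pair_r1_r2 tensor_pair_commute[OF symm_r2])
  finally show "pair \<alpha> (vphi (rsharp r1 \<gamma>)) = pair \<alpha> (rsharp r2 (dualmap phi \<gamma>))"
    by (simp add: pair_rsharp)
qed

lemma dualmap_vphi_Lstar: "dualmap vphi (Lstar m x \<beta>) = Lstar m (phi x) (dualmap vphi \<beta>)"
  by (rule pair_ext)
    (simp add: pair_dualmap[OF lin_vphi] pair_Lstar[OF lin_mult_left] vphi_mult)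

lemma dualmap_vphi_brk_r:
  "dualmap vphi (brk_r m r2 \<alpha> \<beta>) = brk_r m r1 (dualmap vphi \<alpha>) (dualmap vphi \<beta>)"
  by (simp add: brk_r_def lin_diff[OF lin_dualmap] dualmap_vphi_Lstar rsharp_dualmap_vphi)

lemma dualmap_phi_adstar: "dualmap phi (adstar m (phi x) \<gamma>) = adstar m x (dualmap phi \<gamma>)"
  by (rule pair_ext)
    (simp add: pair_dualmap[OF lin_phi] pair_adstar[OF lin_mult_left lin_mult_right] phi_comm)

lemma dualmap_phi_Rstar:
  "dualmap phi (Rstar m (rsharp r1 \<gamma>) (dualmap vphi \<alpha>)) = Rstar m (rsharp r2 (dualmap phi \<gamma>)) \<alpha>"
  by (rule pair_ext)
    (simp add: pair_dualmap[OF lin_phi] pair_dualmap[OF lin_vphi] pair_Rstar[OF lin_mult_right]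
      vphi_mult vphi_rsharp)

lemma dualmap_phi_dot_r:
  "dualmap phi (dot_r m r1 (dualmap vphi \<alpha>) \<gamma>) = dot_r m r2 \<alpha> (dualmap phi \<gamma>)"
  by (simp add: dot_r_def lin_diff[OF lin_dualmap] rsharp_dualmap_vphi dualmap_phi_adstar
      dualmap_phi_Rstar)

lemma phi_Lstar_dual: "phi (Lstar_dual m r2 \<alpha> y) = Lstar_dual m r1 (dualmap vphi \<alpha>) (phi y)"
proof (rule pair_ext_right)
  fix \<gamma>
  have "pair \<gamma> (phi (Lstar_dual m r2 \<alpha> y)) = - pair y (dot_r m r2 \<alpha> (dualmap phi \<gamma>))"
    by (simp add: pair_commute[of \<gamma>] pair_commute[of "dualmap phi \<gamma>"]
        pair_Lstar_dual[OF lin_dot_r[OF bilin]] flip: pair_dualmap[OF lin_phi])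
  also have "\<dots> = - pair (phi y) (dot_r m r1 (dualmap vphi \<alpha>) \<gamma>)"
    by (simp add: pair_commute[of y] pair_commute[of "phi y"] pair_dualmap[OF lin_phi]
        flip: dualmap_phi_dot_r)
  also have "\<dots> = pair \<gamma> (Lstar_dual m r1 (dualmap vphi \<alpha>) (phi y))"
    by (simp add: pair_commute[of \<gamma>] pair_Lstar_dual[OF lin_dot_r[OF bilin]])
  finally show "pair \<gamma> (phi (Lstar_dual m r2 \<alpha> y)) = pair \<gamma> (Lstar_dual m r1 (dualmap vphi \<alpha>) (phi y))" .
qed

lemma lie_hom_dualmap_vphi: "lie_hom (brk_r m r2) (brk_r m r1) (dualmap vphi)"
  unfolding lie_hom_def by (simp add: lin_dualmap dualmap_vphi_brk_r)

lemma lie_hom_pair_phase_space: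
  "lie_hom_pair (bracket_p m r2) (bracket_p m r1) (\<lambda>(x, \<alpha>). (phi x, dualmap vphi \<alpha>))"
  unfolding lie_hom_pair_def
proof (intro conjI allI)
  show "lin_pair (\<lambda>(x, \<alpha>). (phi x, dualmap vphi \<alpha>))"
    by (rule lin_pair_map_prod[OF lin_phi lin_dualmap])
  fix a b :: "('n \<Rightarrow> 'k) \<times> ('n \<Rightarrow> 'k)"
  show "(\<lambda>(x, \<alpha>). (phi x, dualmap vphi \<alpha>)) (bracket_p m r2 a b) =
      bracket_p m r1 ((\<lambda>(x, \<alpha>). (phi x, dualmap vphi \<alpha>)) a) ((\<lambda>(x, \<alpha>). (phi x, dualmap vphi \<alpha>)) b)"
    by (cases a; cases b)
      (simp add: bracket_p_def lin_add[OF lin_phi] lin_diff[OF lin_phi] lin_add[OF lin_dualmap]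
        lin_diff[OF lin_dualmap] phi_Lstar_dual phi_comm dualmap_vphi_brk_r dualmap_vphi_Lstar)
qed

end

theorem proposition5p6:
  fixes m :: "('n::finite \<Rightarrow> 'k::field_char_0) \<Rightarrow> ('n \<Rightarrow> 'k) \<Rightarrow> ('n \<Rightarrow> 'k)"
    and r1 r2 :: "'n \<Rightarrow> 'n \<Rightarrow> 'k"
    and phi vphi :: "('n \<Rightarrow> 'k) \<Rightarrow> ('n \<Rightarrow> 'k)"
  assumes "preLie m"
    and "symm r1" and "symm r2"
    and "smatrix m r1" and "smatrix m r2"
    and "weak_hom m r2 r1 phi vphi"
  shows "lie_hom (brk_r m r2) (brk_r m r1) (dualmap vphi)
       \<and> lie_hom_pair (bracket_p m r2) (bracket_p m r1) (\<lambda>(x, \<alpha>). (phi x, dualmap vphi \<alpha>))"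
proof -
  have "bilin m" using \<open>preLie m\<close> unfolding preLie_def by blast
  then interpret weak_hom_setting m r1 r2 phi vphi
    using assms by unfold_locales
  show ?thesis using lie_hom_dualmap_vphi lie_hom_pair_phase_space ..
qed

end
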